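(* Let $(x_n)_{n\ge1}$ be a sequence of real numbers, $L\in\mathbb{R}$ and $\sigma\in\,]0,1]$. Then $i(x_n;L)\ge\sigma$ if and only if there exists a subsequence $(x_{k(n)})_{n\ge1}$ (with $k:\mathbb N\to\mathbb N$ strictly increasing) converging to $L$ such that \[ \delta_-\big(\{k(n)\mid n\in\mathbb N\}\big)\ge\sigma . \]
   Context: Let $\mathbb N=\{1,2,\dots\}$. For $K\subseteq\mathbb N$ the lower and upper densities are $\delta_-(K)=\liminf_{n\to\infty}\frac{|K\cap\{1,\dots,n\}|}{n}$ and $\delta_+(K)=\limsup_{n\to\infty}\frac{|K\cap\{1,\dots,n\}|}{n}$; when they coincide, their common value is the density $\delta(K)$. For a real sequence $(x_n)_{n\ge1}$ and $L\in\mathbb R$, the index of convergence of $(x_n)$ to $L$ is \[ i(x_n;L)=1-\sup_{\varepsilon>0}\delta_+\big(\{n\in\mathbb N\mid |x_n-L|\ge\varepsilon\}\big)=\inf_{\varepsilon>0}\delta_-\big(\{n\in\mathbb N\mid |x_n-L|<\varepsilon\}\big). \] *)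

theory Defs
  imports "HOL-Analysis.Analysis"
begin

definition count_ratio :: "nat set \<Rightarrow> nat \<Rightarrow> real" where
  "count_ratio K n = real (card (K \<inter> {1..n})) / real n"

definition lower_density :: "nat set \<Rightarrow> real" where
  "lower_density K = real_of_ereal (liminf (\<lambda>n. ereal (count_ratio K n)))"

definition upper_density :: "nat set \<Rightarrow> real" where
  "upper_density K = real_of_ereal (limsup (\<lambda>n. ereal (count_ratio K n)))"

definition conv_index :: "(nat \<Rightarrow> real) \<Rightarrow> real \<Rightarrow> real" where
  "conv_index x L = 1 - (SUP \<epsilon>\<in>{0<..}. upper_density {n. n \<ge> 1 \<and> \<bar>x n - L\<bar> \<ge> \<epsilon>})"

end

theory Submission
  imports Defs
begin

(* Write B(e) = {n >= 1. |x n - L| < e}.  The proof rests on a reformulation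
   of the index of convergence: i(x;L) >= sigma iff every B(e), e > 0, has
   lower density >= sigma.  This follows by complementation, since
   {n >= 1. |x n - L| >= e} and B(e) partition {1..n}, together with a
   characterisation of lower/upper density bounds by eventual bounds on the
   counting ratios (first two sections).
   Backward direction: the range of a subsequence converging to L lies in B(e)
   up to finitely many elements, and such finite perturbations cannot lower
   the lower density.
   Forward direction: a diagonal argument turns the decreasing family
   B(1) \<supseteq> B(1/2) \<supseteq> B(1/3) ..., each of lower density >= sigma, into a single
   set K of lower density >= sigma with K - B(1/j) finite for every j.  Since
   sigma > 0, K is infinite, and its increasing enumeration is the required
   subsequence. *)

section \<open>Counting ratios and densities\<close>

lemma count_ratio_bounds: "0 \<le> count_ratio K n \<and> count_ratio K n \<le> 1"
proof -
  have "card (K \<inter> {1..n}) \<le> card {1..n}" by (rule card_mono) auto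
  then have "real (card (K \<inter> {1..n})) \<le> real n" by simp
  then show ?thesis unfolding count_ratio_def
    by (cases "n = 0") (auto simp: divide_le_eq_1)
qed

lemma count_ratio_le_shift:
  assumes "card (A \<inter> {1..n}) \<le> card (B \<inter> {1..n}) + M"
  shows "count_ratio A n \<le> count_ratio B n + real M / real n"
proof -
  have "real (card (A \<inter> {1..n})) / real n \<le> (real (card (B \<inter> {1..n})) + real M) / real n"
    using assms by (intro divide_right_mono) auto
  then show ?thesis unfolding count_ratio_def by (simp add: add_divide_distrib)
qed

lemma eventually_const_over_n_less:
  "(\<delta>::real) > 0 \<Longrightarrow> eventually (\<lambda>n. c / real n < \<delta>) sequentially"
  using order_tendstoD(2)[OF lim_const_over_n[of c]] by simp

text \<open>Since the counting ratios lie in [0,1], the extended-real liminf and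
  limsup in the definitions of the densities are finite.\<close>
lemma liminf_count_ratio: "liminf (\<lambda>n. ereal (count_ratio K n)) = ereal (lower_density K)"
proof -
  have "ereal 0 \<le> liminf (\<lambda>n. ereal (count_ratio K n))"
    by (rule Liminf_bounded) (simp add: count_ratio_bounds)
  moreover have "limsup (\<lambda>n. ereal (count_ratio K n)) \<le> ereal 1"
    by (rule Limsup_bounded) (simp add: count_ratio_bounds)
  then have "liminf (\<lambda>n. ereal (count_ratio K n)) \<le> ereal 1"
    using Liminf_le_Limsup[OF trivial_limit_sequentially] order_trans by blast
  ultimately show ?thesis unfolding lower_density_def
    by (cases "liminf (\<lambda>n. ereal (count_ratio K n))") auto
qed

lemma limsup_count_ratio: "limsup (\<lambda>n. ereal (count_ratio K n)) = ereal (upper_density K)"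
proof -
  have "ereal 0 \<le> liminf (\<lambda>n. ereal (count_ratio K n))"
    by (rule Liminf_bounded) (simp add: count_ratio_bounds)
  then have "ereal 0 \<le> limsup (\<lambda>n. ereal (count_ratio K n))"
    using Liminf_le_Limsup[OF trivial_limit_sequentially] order_trans by blast
  moreover have "limsup (\<lambda>n. ereal (count_ratio K n)) \<le> ereal 1"
    by (rule Limsup_bounded) (simp add: count_ratio_bounds)
  ultimately show ?thesis unfolding upper_density_def
    by (cases "limsup (\<lambda>n. ereal (count_ratio K n))") auto
qed

lemma le_lower_density_iff:
  "\<sigma> \<le> lower_density K \<longleftrightarrow> (\<forall>\<delta>>0. eventually (\<lambda>n. \<sigma> - \<delta> < count_ratio K n) sequentially)"
proof -
  have "\<sigma> \<le> lower_density K \<longleftrightarrow> ereal \<sigma> \<le> liminf (\<lambda>n. ereal (count_ratio K n))"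
    by (simp add: liminf_count_ratio)
  also have "\<dots> \<longleftrightarrow> (\<forall>y<ereal \<sigma>. eventually (\<lambda>n. y < ereal (count_ratio K n)) sequentially)"
    by (rule le_Liminf_iff)
  also have "\<dots> \<longleftrightarrow> (\<forall>\<delta>>0. eventually (\<lambda>n. \<sigma> - \<delta> < count_ratio K n) sequentially)"
  proof (intro iffI allI impI)
    fix \<delta> :: real
    assume "\<forall>y<ereal \<sigma>. eventually (\<lambda>n. y < ereal (count_ratio K n)) sequentially" "\<delta> > 0"
    then show "eventually (\<lambda>n. \<sigma> - \<delta> < count_ratio K n) sequentially"
      by (auto elim: allE[of _ "ereal (\<sigma> - \<delta>)"])
  next
    fix y
    assume H: "\<forall>\<delta>>0. eventually (\<lambda>n. \<sigma> - \<delta> < count_ratio K n) sequentially"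
      and y: "y < ereal \<sigma>"
    show "eventually (\<lambda>n. y < ereal (count_ratio K n)) sequentially"
    proof (cases y)
      case (real r)
      with y H[rule_format, of "\<sigma> - r"] show ?thesis by simp
    qed (use y in auto)
  qed
  finally show ?thesis .
qed

lemma upper_density_le_iff:
  "upper_density K \<le> \<tau> \<longleftrightarrow> (\<forall>\<delta>>0. eventually (\<lambda>n. count_ratio K n < \<tau> + \<delta>) sequentially)"
proof -
  have "upper_density K \<le> \<tau> \<longleftrightarrow> limsup (\<lambda>n. ereal (count_ratio K n)) \<le> ereal \<tau>"
    by (simp add: limsup_count_ratio)
  also have "\<dots> \<longleftrightarrow> (\<forall>y>ereal \<tau>. eventually (\<lambda>n. ereal (count_ratio K n) < y) sequentially)"
    by (rule Limsup_le_iff)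
  also have "\<dots> \<longleftrightarrow> (\<forall>\<delta>>0. eventually (\<lambda>n. count_ratio K n < \<tau> + \<delta>) sequentially)"
  proof (intro iffI allI impI)
    fix \<delta> :: real
    assume "\<forall>y>ereal \<tau>. eventually (\<lambda>n. ereal (count_ratio K n) < y) sequentially" "\<delta> > 0"
    then show "eventually (\<lambda>n. count_ratio K n < \<tau> + \<delta>) sequentially"
      by (auto elim: allE[of _ "ereal (\<tau> + \<delta>)"])
  next
    fix y
    assume H: "\<forall>\<delta>>0. eventually (\<lambda>n. count_ratio K n < \<tau> + \<delta>) sequentially"
      and y: "y > ereal \<tau>"
    show "eventually (\<lambda>n. ereal (count_ratio K n) < y) sequentially"
    proof (cases y)
      case (real r)
      with y H[rule_format, of "r - \<tau>"] show ?thesis by simp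
    qed (use y in auto)
  qed
  finally show ?thesis .
qed

text \<open>Boundedness needed to exchange the supremum over \<epsilon> with the inequality.\<close>
lemma upper_density_le_1: "upper_density K \<le> 1"
  unfolding upper_density_le_iff
proof (intro allI impI always_eventually)
  fix \<delta> :: real assume "\<delta> > 0"
  then show "count_ratio K n < 1 + \<delta>" for n using count_ratio_bounds[of K n] by linarith
qed

lemma count_ratio_compl:
  assumes "n \<ge> 1"
  shows "count_ratio {m. m \<ge> 1 \<and> P m} n = 1 - count_ratio {m. m \<ge> 1 \<and> \<not> P m} n"
proof -
  let ?Y = "{m. m \<ge> 1 \<and> P m} \<inter> {1..n}" and ?N = "{m. m \<ge> 1 \<and> \<not> P m} \<inter> {1..n}"
  have "card ?Y + card ?N = card (?Y \<union> ?N)"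
    by (rule card_Un_disjoint[symmetric]) auto
  also have "?Y \<union> ?N = {1..n}" by auto
  finally have "card ?Y + card ?N = n" by simp
  then have "real (card ?Y) = real n - real (card ?N)" by linarith
  with assms show ?thesis unfolding count_ratio_def by (simp add: field_simps)
qed

lemma upper_density_compl_le_iff:
  "upper_density {m. m \<ge> 1 \<and> P m} \<le> 1 - \<sigma> \<longleftrightarrow> \<sigma> \<le> lower_density {m. m \<ge> 1 \<and> \<not> P m}"
proof -
  have "eventually (\<lambda>n. (count_ratio {m. m \<ge> 1 \<and> P m} n < 1 - \<sigma> + \<delta>)
          = (\<sigma> - \<delta> < count_ratio {m. m \<ge> 1 \<and> \<not> P m} n)) sequentially" for \<delta>
    using eventually_ge_at_top[of "1::nat"]
  proof (rule eventually_mono)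
    fix n :: nat assume "n \<ge> 1"
    from count_ratio_compl[OF this, of P]
    show "(count_ratio {m. m \<ge> 1 \<and> P m} n < 1 - \<sigma> + \<delta>)
        = (\<sigma> - \<delta> < count_ratio {m. m \<ge> 1 \<and> \<not> P m} n)"
      by linarith
  qed
  then have "eventually (\<lambda>n. count_ratio {m. m \<ge> 1 \<and> P m} n < 1 - \<sigma> + \<delta>) sequentially
      = eventually (\<lambda>n. \<sigma> - \<delta> < count_ratio {m. m \<ge> 1 \<and> \<not> P m} n) sequentially" for \<delta>
    by (rule eventually_subst)
  then show ?thesis by (simp add: upper_density_le_iff le_lower_density_iff)
qed

section \<open>Reformulation of the index of convergence\<close>

lemma conv_index_ge_iff:
  "conv_index x L \<ge> \<sigma> \<longleftrightarrow> (\<forall>\<epsilon>>0. \<sigma> \<le> lower_density {n. n \<ge> 1 \<and> \<bar>x n - L\<bar> < \<epsilon>})"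
proof -
  have "conv_index x L \<ge> \<sigma> \<longleftrightarrow>
      (SUP \<epsilon>\<in>{0<..}. upper_density {n. n \<ge> 1 \<and> \<bar>x n - L\<bar> \<ge> \<epsilon>}) \<le> 1 - \<sigma>"
    unfolding conv_index_def by linarith
  also have "\<dots> \<longleftrightarrow> (\<forall>\<epsilon>\<in>{0<..}. upper_density {n. n \<ge> 1 \<and> \<bar>x n - L\<bar> \<ge> \<epsilon>} \<le> 1 - \<sigma>)"
    by (rule cSUP_le_iff) (auto intro: bdd_aboveI[where M=1] simp: upper_density_le_1)
  also have "\<dots> \<longleftrightarrow> (\<forall>\<epsilon>>0. \<sigma> \<le> lower_density {n. n \<ge> 1 \<and> \<bar>x n - L\<bar> < \<epsilon>})"
    using upper_density_compl_le_iff[of "\<lambda>n. \<bar>x n - L\<bar> \<ge> _"] by (simp add: not_le Ball_def)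
  finally show ?thesis .
qed

section \<open>Finite perturbations and finite sets\<close>

lemma lower_density_le_almost_subset:
  assumes "\<And>n. card (A \<inter> {1..n}) \<le> card (B \<inter> {1..n}) + M"
  shows "lower_density A \<le> lower_density B"
  unfolding le_lower_density_iff
proof (intro allI impI)
  fix \<delta> :: real assume "\<delta> > 0"
  have shift: "count_ratio A n \<le> count_ratio B n + real M / real n" for n
    by (rule count_ratio_le_shift[OF assms])
  from \<open>\<delta> > 0\<close> have "eventually (\<lambda>n. lower_density A - \<delta>/2 < count_ratio A n) sequentially"
    and "eventually (\<lambda>n. real M / real n < \<delta>/2) sequentially"
    using le_lower_density_iff[of "lower_density A" A] eventually_const_over_n_less by auto
  then show "eventually (\<lambda>n. lower_density A - \<delta> < count_ratio B n) sequentially"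
  proof eventually_elim
    case (elim n)
    with shift[of n] show ?case by linarith
  qed
qed

lemma lower_density_empty: "lower_density {} = 0"
  unfolding lower_density_def count_ratio_def by (simp add: Liminf_const)

lemma lower_density_finite:
  assumes "finite K"
  shows "lower_density K = 0"
proof -
  have "card (K \<inter> {1..n}) \<le> card ({} \<inter> {1..n}) + card K" for n
    using assms by (simp add: card_mono)
  then have "lower_density K \<le> 0"
    using lower_density_le_almost_subset lower_density_empty by metis
  moreover have "0 \<le> lower_density K"
    unfolding le_lower_density_iff
  proof (intro allI impI always_eventually)
    fix \<delta> :: real assume "\<delta> > 0"
    then show "0 - \<delta> < count_ratio K n" for n using count_ratio_bounds[of K n] by linarith
  qed
  ultimately show ?thesis by simp
qed

section \<open>The diagonal argument\<close>

text \<open>A decreasing family of sets of lower density at least \<sigma> admits a single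
  set K \<subseteq> B 0 of lower density at least \<sigma> that lies in every B j up to
  finitely many elements: K keeps those m \<in> B 0 that belong to B j for every
  threshold N j \<le> m, where N j is chosen so late that the counting ratio of
  B j is already above \<sigma> - 1/(j+1).\<close>
lemma diagonal_lower_density:
  fixes B :: "nat \<Rightarrow> nat set"
  assumes dec: "\<And>i j. i \<le> j \<Longrightarrow> B j \<subseteq> B i"
    and dens: "\<And>j. \<sigma> \<le> lower_density (B j)"
  shows "\<exists>K \<subseteq> B 0. (\<forall>j. finite (K - B j)) \<and> \<sigma> \<le> lower_density K"
proof -
  have "\<forall>j. \<exists>N. \<forall>n\<ge>N. \<sigma> - 1 / real (Suc j) < count_ratio (B j) n"
    using dens unfolding le_lower_density_iff eventually_sequentially by simp
  then obtain g where g: "\<And>j n. n \<ge> g j \<Longrightarrow> \<sigma> - 1 / real (Suc j) < count_ratio (B j) n"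
    by metis
  define N where "N j = j + (\<Sum>i\<le>j. g i)" for j
  have N_mono: "strict_mono N" unfolding N_def by (rule strict_monoI_Suc) simp
  have N_g: "g j \<le> N j" for j
    unfolding N_def using sum_nonneg_leq_bound[of "{..j}" g _ j] by fastforce
  define K where "K = {m \<in> B 0. \<forall>j. N j \<le> m \<longrightarrow> m \<in> B j}"
  have "K - B j \<subseteq> {..<N j}" for j unfolding K_def using not_less by blast
  then have K_almost: "finite (K - B j)" for j by (rule finite_subset) simp
  text \<open>Between two thresholds N J \<le> n < N (J+1), B J \<inter> {1..n} is contained in K.\<close>
  have K_ratio: "\<sigma> - 1 / real (Suc j) < count_ratio K n" if n: "N j \<le> n" for j n
  proof -
    define J where "J = Max {i. N i \<le> n}"
    have fin: "finite {i. N i \<le> n}"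
      by (rule finite_subset[of _ "{..n}"])
        (auto intro: order_trans[OF strict_mono_imp_increasing[OF N_mono]])
    have "j \<le> J" and "N J \<le> n" and J_max: "\<And>i. N i \<le> n \<Longrightarrow> i \<le> J"
      unfolding J_def using fin n Max_in[OF fin] by auto
    have "B J \<inter> {1..n} \<subseteq> K \<inter> {1..n}"
    proof
      fix m assume m: "m \<in> B J \<inter> {1..n}"
      have "m \<in> B i" if "N i \<le> m" for i
      proof -
        have "N i \<le> n" using that m by auto
        then show ?thesis using dec[OF J_max] m by blast
      qed
      moreover have "m \<in> B 0" using dec[of 0 J] m by auto
      ultimately show "m \<in> K \<inter> {1..n}" using m unfolding K_def by auto
    qed
    then have "card (B J \<inter> {1..n}) \<le> card (K \<inter> {1..n})" by (intro card_mono) auto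
    then have "count_ratio (B J) n \<le> count_ratio K n"
      unfolding count_ratio_def by (intro divide_right_mono) auto
    moreover have "\<sigma> - 1 / real (Suc J) < count_ratio (B J) n"
      by (rule g) (use N_g[of J] \<open>N J \<le> n\<close> in linarith)
    moreover have "1 / real (Suc J) \<le> 1 / real (Suc j)"
      using \<open>j \<le> J\<close> by (simp add: frac_le)
    ultimately show ?thesis by linarith
  qed
  have "\<sigma> \<le> lower_density K" unfolding le_lower_density_iff
  proof (intro allI impI)
    fix \<delta> :: real assume "\<delta> > 0"
    then obtain j where j: "1 / real (Suc j) < \<delta>"
      using reals_Archimedean by (metis inverse_eq_divide)
    show "eventually (\<lambda>n. \<sigma> - \<delta> < count_ratio K n) sequentially"
      using eventually_ge_at_top[of "N j"]
    proof (rule eventually_mono)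
      fix n assume "N j \<le> n"
      with K_ratio[OF this] j show "\<sigma> - \<delta> < count_ratio K n" by linarith
    qed
  qed
  moreover have "K \<subseteq> B 0" unfolding K_def by auto
  ultimately show ?thesis using K_almost by blast
qed

section \<open>Subsequences indexed by sets\<close>

lemma enumerate_positive_set:
  assumes inf: "infinite K" and pos: "K \<subseteq> {1..}"
  obtains k :: "nat \<Rightarrow> nat" where "strict_mono_on {1..} k" "\<forall>n\<ge>1. k n \<ge> 1"
    "k ` {1..} = K" "\<And>n. n - 1 \<le> k n"
proof
  define k where "k n = enumerate K (n - 1)" for n
  show "strict_mono_on {1..} k"
    unfolding k_def by (rule strict_mono_onI) (use inf in auto)
  show "k ` {1..} = K"
  proof
    show "k ` {1..} \<subseteq> K" unfolding k_def using enumerate_in_set[OF inf] by auto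
    show "K \<subseteq> k ` {1..}"
    proof
      fix s assume "s \<in> K"
      then obtain i where "enumerate K i = s" using enumerate_Ex[OF inf] by blast
      then have "k (Suc i) = s" unfolding k_def by simp
      then show "s \<in> k ` {1..}" by force
    qed
  qed
  then show "\<forall>n\<ge>1. k n \<ge> 1" using pos by auto
  show "n - 1 \<le> k n" for n unfolding k_def by (rule le_enumerate[OF inf])
qed

text \<open>Backward direction: the range of a subsequence converging to L lies in
  each \<epsilon>-neighbourhood set up to finitely many elements.\<close>
lemma subsequence_range_density_le:
  fixes x :: "nat \<Rightarrow> real"
  assumes "(\<lambda>n. x (k n)) \<longlonglongrightarrow> L" and "\<epsilon> > 0"
  shows "lower_density (k ` {1..}) \<le> lower_density {n. n \<ge> 1 \<and> \<bar>x n - L\<bar> < \<epsilon>}"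
proof -
  let ?B = "{n. n \<ge> 1 \<and> \<bar>x n - L\<bar> < \<epsilon>}"
  from assms obtain M where M: "\<forall>n\<ge>M. \<bar>x (k n) - L\<bar> < \<epsilon>"
    unfolding LIMSEQ_iff by (auto simp: real_norm_def)
  have incl: "k ` {1..} \<inter> {1..n} \<subseteq> (?B \<inter> {1..n}) \<union> k ` {..<M}" for n
  proof
    fix y assume "y \<in> k ` {1..} \<inter> {1..n}"
    then obtain m where "y = k m" "y \<in> {1..n}" by auto
    then show "y \<in> (?B \<inter> {1..n}) \<union> k ` {..<M}" using M by (cases "m < M") auto
  qed
  have "card (k ` {1..} \<inter> {1..n}) \<le> card (?B \<inter> {1..n}) + M" for n
  proof -
    have "card (k ` {1..} \<inter> {1..n}) \<le> card ((?B \<inter> {1..n}) \<union> k ` {..<M})"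
      using incl[of n] by (intro card_mono) auto
    also have "\<dots> \<le> card (?B \<inter> {1..n}) + card (k ` {..<M})" by (rule card_Un_le)
    also have "card (k ` {..<M}) \<le> M" using card_image_le[of "{..<M}" k] by simp
    finally show ?thesis by simp
  qed
  then show ?thesis by (rule lower_density_le_almost_subset)
qed

text \<open>Forward direction: if every \<epsilon>-neighbourhood set has lower density at least
  \<sigma> > 0, the diagonal set for \<epsilon> = 1/(j+1) is infinite and its enumeration is a
  subsequence converging to L.\<close>
lemma dense_convergent_subsequence:
  fixes x :: "nat \<Rightarrow> real"
  assumes "0 < \<sigma>" and H: "\<forall>\<epsilon>>0. \<sigma> \<le> lower_density {n. n \<ge> 1 \<and> \<bar>x n - L\<bar> < \<epsilon>}"
  shows "\<exists>k :: nat \<Rightarrow> nat. strict_mono_on {1..} k \<and> (\<forall>n\<ge>1. k n \<ge> 1) \<and>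
       (\<lambda>n. x (k n)) \<longlonglongrightarrow> L \<and> lower_density (k ` {1..}) \<ge> \<sigma>"
proof -
  define B where "B j = {n. n \<ge> 1 \<and> \<bar>x n - L\<bar> < 1 / real (Suc j)}" for j
  have "B j \<subseteq> B i" if "i \<le> j" for i j
    using that order_less_le_trans[OF _ frac_le[of 1 1 "real (Suc i)" "real (Suc j)"]]
    unfolding B_def by auto
  moreover have "\<sigma> \<le> lower_density (B j)" for j unfolding B_def using H by simp
  ultimately obtain K where K_pos: "K \<subseteq> B 0" and K_almost: "\<And>j. finite (K - B j)"
    and K_dens: "\<sigma> \<le> lower_density K"
    using diagonal_lower_density by metis
  have "infinite K" using K_dens \<open>0 < \<sigma>\<close> lower_density_finite by force
  moreover have "K \<subseteq> {1..}" using K_pos unfolding B_def by auto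
  ultimately obtain k where k: "strict_mono_on {1..} k" "\<forall>n\<ge>1. k n \<ge> 1"
    "k ` {1..} = K" and k_large: "\<And>n. n - 1 \<le> k n"
    using enumerate_positive_set by metis
  have "(\<lambda>n. x (k n)) \<longlonglongrightarrow> L"
    unfolding LIMSEQ_iff real_norm_def
  proof (intro allI impI)
    fix r :: real assume "r > 0"
    then obtain j where j: "1 / real (Suc j) < r"
      using reals_Archimedean by (metis inverse_eq_divide)
    obtain M where M: "K - B j \<subseteq> {..<M}"
      using K_almost finite_nat_bounded by blast
    have "\<bar>x (k n) - L\<bar> < r" if "n \<ge> Suc M" for n
    proof -
      have "k n \<in> K" using \<open>k ` {1..} = K\<close> that by force
      moreover have "M \<le> k n" using k_large[of n] that by simp
      ultimately have "k n \<in> B j" using M by auto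
      then show ?thesis using j unfolding B_def by simp
    qed
    then show "\<exists>no. \<forall>n\<ge>no. \<bar>x (k n) - L\<bar> < r" by blast
  qed
  with k K_dens show ?thesis by blast
qed

theorem mainTheorem1:
  fixes x :: "nat \<Rightarrow> real" and L :: real and \<sigma> :: real
  assumes "0 < \<sigma>" and "\<sigma> \<le> 1"
  shows "conv_index x L \<ge> \<sigma> \<longleftrightarrow>
    (\<exists>k :: nat \<Rightarrow> nat. strict_mono_on {1..} k \<and> (\<forall>n\<ge>1. k n \<ge> 1) \<and>
       (\<lambda>n. x (k n)) \<longlonglongrightarrow> L \<and>
       lower_density (k ` {1..}) \<ge> \<sigma>)"
  unfolding conv_index_ge_iff
proof
  assume "\<forall>\<epsilon>>0. \<sigma> \<le> lower_density {n. n \<ge> 1 \<and> \<bar>x n - L\<bar> < \<epsilon>}"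
  then show "\<exists>k. strict_mono_on {1..} k \<and> (\<forall>n\<ge>1. k n \<ge> 1) \<and>
      (\<lambda>n. x (k n)) \<longlonglongrightarrow> L \<and> lower_density (k ` {1..}) \<ge> \<sigma>"
    by (rule dense_convergent_subsequence[OF assms(1)])
next
  assume "\<exists>k. strict_mono_on {1..} k \<and> (\<forall>n\<ge>1. k n \<ge> 1) \<and>
      (\<lambda>n. x (k n)) \<longlonglongrightarrow> L \<and> lower_density (k ` {1..}) \<ge> \<sigma>"
  then obtain k where lim: "(\<lambda>n. x (k n)) \<longlonglongrightarrow> L" and dens: "\<sigma> \<le> lower_density (k ` {1..})"
    by blast
  show "\<forall>\<epsilon>>0. \<sigma> \<le> lower_density {n. n \<ge> 1 \<and> \<bar>x n - L\<bar> < \<epsilon>}"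
  proof (intro allI impI)
    fix \<epsilon> :: real assume "\<epsilon> > 0"
    with lim have "lower_density (k ` {1..}) \<le> lower_density {n. n \<ge> 1 \<and> \<bar>x n - L\<bar> < \<epsilon>}"
      by (rule subsequence_range_density_le)
    with dens show "\<sigma> \<le> lower_density {n. n \<ge> 1 \<and> \<bar>x n - L\<bar> < \<epsilon>}" by linarith
  qed
qed

end
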